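(* Fix a set $\mathcal{X}$, a measure space $\mathcal{Y}$, and a real number $\alpha>1$. Suppose that for each $y\in\mathcal{Y}$ a topology is given on the fibre $\mathcal{X}\times\{y\}$, and that $\phi:\mathcal{X}\to\mathcal{X}$ is a function such that the induced map $(x,y)\mapsto(\phi(x),y)$ is continuous on each such fibre. Suppose further that $\gamma:\mathcal{X}\times\mathcal{Y}\to\mathbb{R}$ is a function which (1) is bounded; (2) is continuous on the fibres of $\mathcal{X}\times\mathcal{Y}\to\mathcal{Y}$; (3) is measurable on the fibres of $\mathcal{X}\times\mathcal{Y}\to\mathcal{X}$; and (4) vanishes off $\mathcal{X}\times W$ for some set $W\subseteq\mathcal{Y}$ of finite measure. Then there exists a unique bounded function $\hat{\gamma}:\mathcal{X}\times\mathcal{Y}\to\mathbb{R}$, continuous in the first coordinate and integrable in the second, with \[\gamma(x,y)=\hat{\gamma}(\phi(x),y)-\alpha\hat{\gamma}(x,y)\] for all $x\in\mathcal{X}$ and $y\in\mathcal{Y}$. *)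

theory Defs
  imports "HOL-Analysis.Analysis"
begin

end

theory Submission
  imports Defs
begin

text \<open>
  Fibrewise the equation reads \<open>f = g \<circ> \<phi> - \<alpha> g\<close>, i.e. \<open>g = \<alpha>\<^sup>-\<^sup>1 (g \<circ> \<phi> - f)\<close>.
  Iterating gives the solution \<open>g = - (\<Sum>n. f \<circ> \<phi>\<^sup>n / \<alpha>\<^sup>n\<^sup>+\<^sup>1)\<close>, which converges
  uniformly because \<open>f\<close> is bounded and \<open>\<alpha> > 1\<close>; uniform convergence transfers continuity
  in \<open>x\<close>, and the bound \<open>\<bar>g\<bar> \<le> B / (\<alpha> - 1)\<close> together with the support of \<open>\<gamma>\<close> in a
  set of finite measure gives integrability in \<open>y\<close>. The difference \<open>d\<close> of two bounded
  solutions satisfies \<open>d \<circ> \<phi>\<^sup>n = \<alpha>\<^sup>n d\<close>, so it vanishes.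
\<close>

definition cohom_solution :: "real \<Rightarrow> ('a \<Rightarrow> 'a) \<Rightarrow> ('a \<Rightarrow> real) \<Rightarrow> 'a \<Rightarrow> real" where
  "cohom_solution \<alpha> \<phi> f x = - (\<Sum>n. f ((\<phi> ^^ n) x) / \<alpha> ^ Suc n)"

lemma funpow_in_invariant_set:
  assumes "\<phi> ` X \<subseteq> X" "x \<in> X"
  shows "(\<phi> ^^ n) x \<in> X"
  using assms by (induction n) auto

lemma continuous_map_funpow:
  assumes "continuous_map T T \<phi>"
  shows "continuous_map T T (\<phi> ^^ n)"
proof (induction n)
  case (Suc n)
  then show ?case
    using continuous_map_compose[OF Suc assms] by (simp add: o_def)
qed simp

lemma bounded_expanded_eq_zero:
  fixes d :: "'a \<Rightarrow> real"
  assumes "\<alpha> > 1" "\<phi> ` X \<subseteq> X" "x \<in> X"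
    and bound: "\<And>z. z \<in> X \<Longrightarrow> \<bar>d z\<bar> \<le> B"
    and expand: "\<And>z. z \<in> X \<Longrightarrow> d (\<phi> z) = \<alpha> * d z"
  shows "d x = 0"
proof (rule ccontr)
  have iterate: "d ((\<phi> ^^ n) x) = \<alpha> ^ n * d x" for n
    by (induction n) (simp_all add: expand funpow_in_invariant_set[OF assms(2,3)])
  assume "d x \<noteq> 0"
  then have pos: "\<bar>d x\<bar> > 0" by simp
  obtain n where "B / \<bar>d x\<bar> < \<alpha> ^ n"
    using real_arch_pow[OF \<open>\<alpha> > 1\<close>] by blast
  then have "B < \<alpha> ^ n * \<bar>d x\<bar>" using pos by (simp add: divide_less_eq)
  also have "\<dots> = \<bar>d ((\<phi> ^^ n) x)\<bar>" using \<open>\<alpha> > 1\<close> by (simp add: iterate abs_mult)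
  also have "\<dots> \<le> B" by (rule bound[OF funpow_in_invariant_set[OF assms(2,3)]])
  finally show False by simp
qed

lemma cohom_equation_unique:
  fixes g g' f :: "'a \<Rightarrow> real"
  assumes "\<alpha> > 1" "\<phi> ` X \<subseteq> X" "x \<in> X"
    and "\<And>z. z \<in> X \<Longrightarrow> \<bar>g z\<bar> \<le> B" "\<And>z. z \<in> X \<Longrightarrow> \<bar>g' z\<bar> \<le> B'"
    and "\<And>z. z \<in> X \<Longrightarrow> f z = g (\<phi> z) - \<alpha> * g z"
    and "\<And>z. z \<in> X \<Longrightarrow> f z = g' (\<phi> z) - \<alpha> * g' z"
  shows "g' x = g x"
proof -
  have "(\<lambda>z. g' z - g z) x = 0"
  proof (rule bounded_expanded_eq_zero[OF assms(1-3)])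
    fix z assume z: "z \<in> X"
    show "\<bar>g' z - g z\<bar> \<le> B' + B" using assms(4,5)[OF z] by linarith
    show "g' (\<phi> z) - g (\<phi> z) = \<alpha> * (g' z - g z)"
      using assms(6,7)[OF z] by (simp add: algebra_simps)
  qed
  then show ?thesis by simp
qed

lemma geometric_tail_sums:
  fixes \<alpha> :: real
  assumes "\<alpha> > 1"
  shows "(\<lambda>n. B / \<alpha> ^ Suc n) sums (B / (\<alpha> - 1))"
proof -
  have "(\<lambda>n. (1 / \<alpha>) ^ n) sums (1 / (1 - 1 / \<alpha>))"
    using assms by (intro geometric_sums) simp
  then have "(\<lambda>n. B / \<alpha> * (1 / \<alpha>) ^ n) sums (B / \<alpha> * (1 / (1 - 1 / \<alpha>)))"
    by (rule sums_mult)
  moreover have "B / \<alpha> * (1 / (1 - 1 / \<alpha>)) = B / (\<alpha> - 1)"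
    using assms by (simp add: field_simps)
  moreover have "(\<lambda>n. B / \<alpha> * (1 / \<alpha>) ^ n) = (\<lambda>n. B / \<alpha> ^ Suc n)"
    by (simp add: fun_eq_iff power_one_over)
  ultimately show ?thesis by metis
qed

context
  fixes \<alpha> :: real and \<phi> :: "'a \<Rightarrow> 'a" and f :: "'a \<Rightarrow> real" and X :: "'a set" and B :: real
  assumes alpha: "\<alpha> > 1" and invariant: "\<phi> ` X \<subseteq> X"
    and bounded: "\<And>x. x \<in> X \<Longrightarrow> \<bar>f x\<bar> \<le> B"
begin

lemma cohom_series_term_bound:
  assumes "x \<in> X"
  shows "norm (f ((\<phi> ^^ n) x) / \<alpha> ^ Suc n) \<le> B / \<alpha> ^ Suc n"
  using bounded[OF funpow_in_invariant_set[OF invariant assms]] alpha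
  by (simp add: divide_right_mono)

lemma summable_cohom_series:
  assumes "x \<in> X"
  shows "summable (\<lambda>n. f ((\<phi> ^^ n) x) / \<alpha> ^ Suc n)"
  using summable_comparison_test'[OF sums_summable[OF geometric_tail_sums[OF alpha]]
      cohom_series_term_bound[OF assms]] .

lemma cohom_solution_bound:
  assumes "x \<in> X"
  shows "\<bar>cohom_solution \<alpha> \<phi> f x\<bar> \<le> B / (\<alpha> - 1)"
proof -
  let ?a = "\<lambda>n. f ((\<phi> ^^ n) x) / \<alpha> ^ Suc n"
  have summable_norm_terms: "summable (\<lambda>n. norm (?a n))"
    by (rule summable_comparison_test'[OF sums_summable[OF geometric_tail_sums[OF alpha]]])
      (use cohom_series_term_bound[OF assms] in simp)
  have "\<bar>\<Sum>n. ?a n\<bar> \<le> (\<Sum>n. norm (?a n))"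
    using summable_norm[OF summable_norm_terms] by simp
  also have "\<dots> \<le> (\<Sum>n. B / \<alpha> ^ Suc n)"
    by (intro suminf_le cohom_series_term_bound[OF assms] summable_norm_terms
        sums_summable[OF geometric_tail_sums[OF alpha]])
  also have "\<dots> = B / (\<alpha> - 1)"
    using geometric_tail_sums[OF alpha] by (rule sums_unique[symmetric])
  finally show ?thesis
    unfolding cohom_solution_def by simp
qed

lemma cohom_solution_equation:
  assumes "x \<in> X"
  shows "f x = cohom_solution \<alpha> \<phi> f (\<phi> x) - \<alpha> * cohom_solution \<alpha> \<phi> f x"
proof -
  let ?a = "\<lambda>z n. f ((\<phi> ^^ n) z) / \<alpha> ^ Suc n"
  have "(\<Sum>n. ?a x (Suc n)) = (\<Sum>n. ?a x n) - ?a x 0"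
    by (rule suminf_split_head[OF summable_cohom_series[OF assms]])
  moreover have "(\<lambda>n. ?a x (Suc n)) = (\<lambda>n. ?a (\<phi> x) n / \<alpha>)"
    by (simp add: funpow_swap1 mult_ac)
  moreover have "(\<Sum>n. ?a (\<phi> x) n / \<alpha>) = (\<Sum>n. ?a (\<phi> x) n) / \<alpha>"
    using invariant assms by (intro suminf_divide summable_cohom_series) auto
  ultimately show ?thesis
    using alpha unfolding cohom_solution_def by (simp add: field_simps)
qed

end

lemma continuous_map_cohom_solution:
  assumes alpha: "\<alpha> > 1" and phi: "continuous_map T T \<phi>"
    and f: "continuous_map T euclideanreal f" and bounded: "\<And>x. x \<in> topspace T \<Longrightarrow> \<bar>f x\<bar> \<le> B"
  shows "continuous_map T euclideanreal (cohom_solution \<alpha> \<phi> f)"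
proof -
  have invariant: "\<phi> ` topspace T \<subseteq> topspace T"
    using phi by (simp add: continuous_map_image_subset_topspace)
  let ?a = "\<lambda>n x. f ((\<phi> ^^ n) x) / \<alpha> ^ Suc n"
  have terms: "continuous_map T euclideanreal (?a n)" for n
    using continuous_map_compose[OF continuous_map_funpow[OF phi] f] alpha
    by (intro continuous_map_real_divide) (auto simp: o_def)
  have limit: "uniform_limit (topspace T) (\<lambda>N x. \<Sum>n<N. ?a n x) (\<lambda>x. \<Sum>n. ?a n x) sequentially"
    using cohom_series_term_bound[OF alpha invariant bounded]
    by (intro Weierstrass_m_test[OF _ sums_summable[OF geometric_tail_sums[OF alpha]]]) auto
  have "continuous_map T Met_TC.mtopology (\<lambda>x. \<Sum>n. ?a n x)"
  proof (rule Met_TC.continuous_map_uniform_limit_alt[where F=sequentially])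
    show "\<forall>\<^sub>F N in sequentially. continuous_map T Met_TC.mtopology (\<lambda>x. \<Sum>n<N. ?a n x)"
      using terms by (auto intro!: always_eventually continuous_map_sum)
    show "\<forall>\<^sub>F N in sequentially. \<forall>x\<in>topspace T. dist (\<Sum>n<N. ?a n x) (\<Sum>n. ?a n x) < e"
      if "e > 0" for e
      using limit that unfolding uniform_limit_iff by auto
  qed auto
  then show ?thesis
    unfolding cohom_solution_def by (auto intro: continuous_map_minus)
qed

lemma integrable_cohom_solution:
  fixes \<gamma> :: "'a \<Rightarrow> 'b \<Rightarrow> real"
  assumes alpha: "\<alpha> > 1" and invariant: "\<phi> ` X \<subseteq> X" and x: "x \<in> X"
    and bounded: "\<And>x y. x \<in> X \<Longrightarrow> y \<in> space M \<Longrightarrow> \<bar>\<gamma> x y\<bar> \<le> B"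
    and meas: "\<And>x. x \<in> X \<Longrightarrow> (\<lambda>y. \<gamma> x y) \<in> borel_measurable M"
    and W: "W \<in> sets M" "emeasure M W < \<infinity>"
    and supp: "\<And>x y. x \<in> X \<Longrightarrow> y \<in> space M - W \<Longrightarrow> \<gamma> x y = 0"
  shows "integrable M (\<lambda>y. cohom_solution \<alpha> \<phi> (\<lambda>x. \<gamma> x y) x)"
proof (rule Bochner_Integration.integrable_bound)
  show "integrable M (\<lambda>y. B / (\<alpha> - 1) * indicator W y :: real)"
    using W by (intro integrable_mult_right integrable_real_indicator) auto
  have "(\<lambda>y. \<gamma> ((\<phi> ^^ n) x) y) \<in> borel_measurable M" for n
    by (rule meas[OF funpow_in_invariant_set[OF invariant x]])
  then show "(\<lambda>y. cohom_solution \<alpha> \<phi> (\<lambda>x. \<gamma> x y) x) \<in> borel_measurable M"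
    unfolding cohom_solution_def by measurable
  show "AE y in M. norm (cohom_solution \<alpha> \<phi> (\<lambda>x. \<gamma> x y) x)
                     \<le> norm (B / (\<alpha> - 1) * indicator W y :: real)"
  proof (rule AE_I2)
    fix y assume y: "y \<in> space M"
    show "norm (cohom_solution \<alpha> \<phi> (\<lambda>x. \<gamma> x y) x) \<le> norm (B / (\<alpha> - 1) * indicator W y :: real)"
    proof (cases "y \<in> W")
      case True
      have "norm (cohom_solution \<alpha> \<phi> (\<lambda>x. \<gamma> x y) x) \<le> B / (\<alpha> - 1)"
        using cohom_solution_bound[OF alpha invariant bounded[OF _ y] x] by simp
      then have "norm (cohom_solution \<alpha> \<phi> (\<lambda>x. \<gamma> x y) x) \<le> \<bar>B / (\<alpha> - 1)\<bar>"
        by (rule order_trans[OF _ abs_ge_self])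
      then show ?thesis
        using True by simp
    next
      case False
      then show ?thesis
        using supp[OF funpow_in_invariant_set[OF invariant x]] y
        by (simp add: cohom_solution_def)
    qed
  qed
qed

theorem mainTheorem12:
  fixes X :: "'a set" and M :: "'b measure" and \<alpha> :: real
    and T :: "'b \<Rightarrow> 'a topology" and \<phi> :: "'a \<Rightarrow> 'a"
    and \<gamma> :: "'a \<Rightarrow> 'b \<Rightarrow> real"
  assumes alpha: "\<alpha> > 1"
    and top: "\<forall>y\<in>space M. topspace (T y) = X"
    and phi_cont: "\<forall>y\<in>space M. continuous_map (T y) (T y) \<phi>"
    and bounded: "\<exists>B. \<forall>x\<in>X. \<forall>y\<in>space M. \<bar>\<gamma> x y\<bar> \<le> B"
    and cont: "\<forall>y\<in>space M. continuous_map (T y) euclideanreal (\<lambda>x. \<gamma> x y)"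
    and meas: "\<forall>x\<in>X. (\<lambda>y. \<gamma> x y) \<in> borel_measurable M"
    and supp: "\<exists>W\<in>sets M. emeasure M W < \<infinity> \<and> (\<forall>x\<in>X. \<forall>y\<in>space M - W. \<gamma> x y = 0)"
  shows "\<exists>g :: 'a \<Rightarrow> 'b \<Rightarrow> real.
           ((\<exists>B. \<forall>x\<in>X. \<forall>y\<in>space M. \<bar>g x y\<bar> \<le> B)
            \<and> (\<forall>y\<in>space M. continuous_map (T y) euclideanreal (\<lambda>x. g x y))
            \<and> (\<forall>x\<in>X. integrable M (\<lambda>y. g x y))
            \<and> (\<forall>x\<in>X. \<forall>y\<in>space M. \<gamma> x y = g (\<phi> x) y - \<alpha> * g x y))
         \<and> (\<forall>g' :: 'a \<Rightarrow> 'b \<Rightarrow> real.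
              ((\<exists>B. \<forall>x\<in>X. \<forall>y\<in>space M. \<bar>g' x y\<bar> \<le> B)
               \<and> (\<forall>y\<in>space M. continuous_map (T y) euclideanreal (\<lambda>x. g' x y))
               \<and> (\<forall>x\<in>X. integrable M (\<lambda>y. g' x y))
               \<and> (\<forall>x\<in>X. \<forall>y\<in>space M. \<gamma> x y = g' (\<phi> x) y - \<alpha> * g' x y))
              \<longrightarrow> (\<forall>x\<in>X. \<forall>y\<in>space M. g' x y = g x y))"
proof (cases "space M = {}")
  case True
  \<comment> \<open>Here \<open>\<phi>\<close> need not map \<open>X\<close> into itself, but every claim is vacuous.\<close>
  then show ?thesis by (intro exI[of _ "\<lambda>_ _. 0"]) auto
next
  case False
  then have invariant: "\<phi> ` X \<subseteq> X"
    using top phi_cont by (metis continuous_map_image_subset_topspace equals0I)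
  obtain B where B: "\<And>x y. x \<in> X \<Longrightarrow> y \<in> space M \<Longrightarrow> \<bar>\<gamma> x y\<bar> \<le> B"
    using bounded by blast
  obtain W where W: "W \<in> sets M" "emeasure M W < \<infinity>"
    and W_supp: "\<And>x y. x \<in> X \<Longrightarrow> y \<in> space M - W \<Longrightarrow> \<gamma> x y = 0"
    using supp by blast
  define g where "g x y = cohom_solution \<alpha> \<phi> (\<lambda>x. \<gamma> x y) x" for x y
  have g_bound: "\<bar>g x y\<bar> \<le> B / (\<alpha> - 1)" if "x \<in> X" "y \<in> space M" for x y
    unfolding g_def using cohom_solution_bound[OF alpha invariant B[OF _ that(2)] that(1)] .
  have g_eq: "\<gamma> x y = g (\<phi> x) y - \<alpha> * g x y" if "x \<in> X" "y \<in> space M" for x y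
    unfolding g_def using cohom_solution_equation[OF alpha invariant B[OF _ that(2)] that(1)] .
  have g_cont: "continuous_map (T y) euclideanreal (\<lambda>x. g x y)" if y: "y \<in> space M" for y
    unfolding g_def
  proof (rule continuous_map_cohom_solution[OF alpha])
    show "continuous_map (T y) (T y) \<phi>" using phi_cont y by blast
    show "continuous_map (T y) euclideanreal (\<lambda>x. \<gamma> x y)" using cont y by blast
    show "\<bar>\<gamma> x y\<bar> \<le> B" if "x \<in> topspace (T y)" for x using B top y that by blast
  qed
  have g_integrable: "integrable M (\<lambda>y. g x y)" if "x \<in> X" for x
    unfolding g_def using integrable_cohom_solution[OF alpha invariant that B meas[rule_format] W W_supp] .
  have g_unique: "g' x y = g x y"
    if g'_bound: "\<exists>B. \<forall>x\<in>X. \<forall>y\<in>space M. \<bar>g' x y\<bar> \<le> B"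
      and g'_eq: "\<forall>x\<in>X. \<forall>y\<in>space M. \<gamma> x y = g' (\<phi> x) y - \<alpha> * g' x y"
      and x: "x \<in> X" and y: "y \<in> space M" for g' x y
  proof -
    obtain B' where B': "\<And>x. x \<in> X \<Longrightarrow> \<bar>g' x y\<bar> \<le> B'"
      using g'_bound y by blast
    show ?thesis
      by (rule cohom_equation_unique[where f="\<lambda>z. \<gamma> z y" and g="\<lambda>z. g z y" and g'="\<lambda>z. g' z y",
            OF alpha invariant x g_bound[OF _ y] B' g_eq[OF _ y]])
        (use g'_eq y in auto)
  qed
  show ?thesis
    by (intro exI[of _ g]) (use g_bound g_eq g_cont g_integrable g_unique in blast)
qed

end
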